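(* Let $d,r,s$ be positive integers with $r\ge s$, let $c$ be an integer with $|c|\le d$, and let $a_1,\dots,a_r$ and $b_1,\dots,b_s$ be integers, none divisible by $3$, with $1\le a_i\le d$ and $1\le b_i\le d$ for all $i$. If $$a_1 3^{2rd}+a_2 3^{2(r-1)d}+\dots+a_r3^{2d}=b_13^{n_1}+b_23^{n_2}+\dots+b_s3^{n_s}+c$$ for integers $n_1>n_2>\dots>n_s\ge0$, then $r=s$, $c=0$, and $a_i=b_i$ and $n_i=2d(r+1-i)$ for $i=1,\dots,r$. *)

theory Defs
  imports Main
begin

end

theory Submission imports Defs begin

(* Read the left-hand side in base Q = 3^(2d): its digits a_i lie in [1, d]. Cutting the exponents
   on the right into blocks [2dk, 2d(k+1)) and comparing block by block from the bottom produces a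
   carry M with 0 \<le> M \<le> d into the next block. A nonzero carry is expensive: one term b 3^f with
   f < 2d never equals x + Q M for |x| \<le> d (by size, or by divisibility by 3^d), and two terms never
   equal a digit plus Q M, since the digit is prime to 3. Hence the right-hand side needs a term for
   every nonzero digit and every nonzero carry, saving at most one where c merges with the lowest
   digit. So r \<le> s, and r = s forces c and all carries to vanish and every block to consist of the
   single term a_i 3^(2d(r+1-i)). *)

definition admissible_coeff :: "nat \<Rightarrow> int \<Rightarrow> bool" where
  "admissible_coeff d x \<longleftrightarrow> 1 \<le> x \<and> x \<le> int d \<and> \<not> 3 dvd x"

lemma int_less_pow3: "int n < 3 ^ n"
proof -
  have "n < 2 ^ n" by simp
  also have "(2::nat) ^ n \<le> 3 ^ n" by (simp add: power_mono)
  finally show ?thesis by (metis of_nat_less_iff of_nat_numeral of_nat_power)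
qed

lemma admissible_coeff_not_dvd:
  assumes "admissible_coeff d b" and "f < e"
  shows "\<not> (3::int) ^ e dvd b * 3 ^ f"
proof
  assume "(3::int) ^ e dvd b * 3 ^ f"
  moreover have "(3::int) ^ Suc f dvd 3 ^ e" by (rule le_imp_power_dvd) (use assms(2) in simp)
  ultimately have "3 ^ f * 3 dvd 3 ^ f * (b::int)" by (metis dvd_trans mult.commute power_Suc)
  hence "3 dvd b" by simp
  thus False using assms(1) by (simp add: admissible_coeff_def)
qed

lemma single_term_ne_carry:
  assumes d: "d \<ge> 1" and b: "admissible_coeff d b" and f: "f < 2 * d"
    and M: "M \<ge> 1" and x: "\<bar>x\<bar> \<le> int d"
  shows "b * 3 ^ f \<noteq> x + 3 ^ (2 * d) * M"
proof
  assume eq: "b * 3 ^ f = x + 3 ^ (2 * d) * M"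
  show False
  proof (cases "d \<le> f")
    case True
    have "(3::int) ^ d dvd b * 3 ^ f" "(3::int) ^ d dvd 3 ^ (2 * d) * M"
      using True by (simp_all add: le_imp_power_dvd)
    hence "(3::int) ^ d dvd x" using eq by (metis dvd_add_left_iff add.commute)
    moreover have "\<bar>x\<bar> < 3 ^ d" using x int_less_pow3[of d] by linarith
    ultimately have "x = 0" using dvd_imp_le_int[of x "3 ^ d"] by (cases "x = 0") auto
    hence "(3::int) ^ (2 * d) dvd b * 3 ^ f" using eq by simp
    thus False using admissible_coeff_not_dvd[OF b f] by simp
  next
    case False
    have b: "0 \<le> b" "b \<le> int d" using b by (simp_all add: admissible_coeff_def)
    have "(3::int) ^ Suc f \<le> 3 ^ d" using False by (intro power_increasing) auto
    hence "3 * (b * 3 ^ f) \<le> int d * 3 ^ d"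
      using b by (simp add: mult_mono mult.left_commute)
    also have "\<dots> < 3 * (3 ^ (2 * d) - int d)"
    proof -
      have d3: "int d < 3 ^ d" by (rule int_less_pow3)
      hence "int d * 3 ^ d < 3 ^ d * 3 ^ d" by (simp add: mult_strict_right_mono)
      moreover have "(3::int) ^ (2 * d) = 3 ^ d * 3 ^ d" by (simp add: power_add mult_2)
      moreover have "3 * 3 ^ d \<le> (3::int) ^ d * 3 ^ d"
        using d power_increasing[of 1 d "3::int"] by (intro mult_right_mono) auto
      ultimately have "int d * 3 ^ d + 3 * int d < 3 * 3 ^ (2 * d)" using d3 by linarith
      thus ?thesis by (simp add: algebra_simps)
    qed
    also have "\<dots> \<le> 3 * (x + 3 ^ (2 * d) * M)"
    proof -
      have "(3::int) ^ (2 * d) \<le> 3 ^ (2 * d) * M" using M by simp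
      hence "3 ^ (2 * d) - int d \<le> x + 3 ^ (2 * d) * M" using abs_le_D2[OF x] by linarith
      thus ?thesis by simp
    qed
    finally show False using eq by simp
  qed
qed

lemma two_terms_ne_carry:
  assumes d: "d \<ge> 1" and A: "admissible_coeff d A"
    and b1: "admissible_coeff d b1" and b2: "admissible_coeff d b2"
    and f: "f1 \<noteq> f2" "f1 < 2 * d" "f2 < 2 * d" and M: "M \<ge> 1"
  shows "b1 * 3 ^ f1 + b2 * 3 ^ f2 \<noteq> A + 3 ^ (2 * d) * M"
proof -
  have "b1 * 3 ^ f1 + b2 * 3 ^ f2 \<noteq> A + 3 ^ (2 * d) * M"
    if b1: "admissible_coeff d b1" and b2: "admissible_coeff d b2"
      and f: "f2 < f1" "f1 < 2 * d" for b1 b2 f1 f2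
  proof (cases f2)
    case 0
    have "\<bar>A - b2\<bar> \<le> int d" using A b2 by (auto simp: admissible_coeff_def)
    from single_term_ne_carry[OF d b1 f(2) M this] 0 show ?thesis by auto
  next
    case (Suc g)
    have "(3::int) dvd b1 * 3 ^ f1 + b2 * 3 ^ f2" using f Suc by (cases f1) auto
    moreover have "(3::int) dvd 3 ^ (2 * d) * M" using d by (cases d) auto
    moreover have "\<not> 3 dvd A" using A by (simp add: admissible_coeff_def)
    ultimately show ?thesis by (metis dvd_add_left_iff)
  qed
  then show ?thesis
    using b1 b2 f by (metis add.commute linorder_neqE_nat)
qed

context
  fixes d m :: nat and T :: "nat set" and B :: "nat \<Rightarrow> int"
  assumes d: "d \<ge> 1" and finite_T: "finite T" and T_block: "T \<subseteq> {m..<m + 2 * d}"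
    and admissible_B: "\<forall>e\<in>T. admissible_coeff d (B e)"
begin

abbreviation block_sum :: int where
  "block_sum \<equiv> \<Sum>e\<in>T. B e * 3 ^ (e - m)"

lemma block_sum_nonneg: "0 \<le> block_sum"
  using admissible_B by (intro sum_nonneg) (auto simp: admissible_coeff_def)

lemma block_sum_eq_0_iff: "block_sum = 0 \<longleftrightarrow> T = {}"
proof
  assume "block_sum = 0"
  moreover have "T \<noteq> {} \<Longrightarrow> 0 < block_sum"
    using finite_T admissible_B by (intro sum_pos) (auto simp: admissible_coeff_def)
  ultimately show "T = {}" by auto
qed simp

lemma block_sum_less: "2 * block_sum < int d * 3 ^ (2 * d)"
proof -
  have "block_sum \<le> (\<Sum>e\<in>T. int d * 3 ^ (e - m))"
    using admissible_B by (intro sum_mono) (auto simp: admissible_coeff_def)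
  also have "\<dots> \<le> (\<Sum>e\<in>{0 + m..<2 * d + m}. int d * 3 ^ (e - m))"
    using T_block by (intro sum_mono2) (auto simp: add.commute)
  also have "\<dots> = int d * (\<Sum>i<2 * d. 3 ^ i)"
    by (subst sum.shift_bounds_nat_ivl) (simp add: sum_distrib_left atLeast0LessThan)
  finally have "2 * block_sum \<le> int d * (3 ^ (2 * d) - 1)"
    using power_diff_1_eq[of "3::int" "2 * d"] by simp
  thus ?thesis using d by (simp add: algebra_simps)
qed

lemma carry_bounds:
  assumes A: "0 \<le> A" "A \<le> int d" and c: "\<bar>c\<bar> \<le> int d"
    and eq: "block_sum = A + c + 3 ^ (2 * d) * M"
  shows "0 \<le> M" "M \<le> int d"
proof -
  have Q: "2 * int d < 3 ^ (2 * d)" using int_less_pow3[of "2 * d"] by simp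
  have "3 ^ (2 * d) * (- 1) < (3::int) ^ (2 * d) * M"
    using eq block_sum_nonneg A abs_le_D1[OF c] abs_le_D2[OF c] Q by simp
  thus "0 \<le> M" using mult_less_cancel_left_pos[of "3 ^ (2 * d)" "- 1" M] by simp
  have "3 ^ (2 * d) * (2 * M) < (3::int) ^ (2 * d) * (int d + 1)"
    using eq block_sum_less A abs_le_D1[OF c] abs_le_D2[OF c] Q by (simp add: algebra_simps)
  thus "M \<le> int d" by (simp add: mult_less_cancel_left)
qed

lemma carry_needs_two_terms:
  assumes M: "M \<ge> 1" and x: "\<bar>x\<bar> \<le> int d" and eq: "block_sum = x + 3 ^ (2 * d) * M"
  shows "2 \<le> card T"
proof -
  have "2 * int d < 3 ^ (2 * d)" using int_less_pow3[of "2 * d"] by simp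
  moreover have "(3::int) ^ (2 * d) \<le> 3 ^ (2 * d) * M" using M by simp
  ultimately have "block_sum \<noteq> 0" using eq abs_le_D2[OF x] by linarith
  hence "card T \<noteq> 0" using block_sum_eq_0_iff finite_T by simp
  moreover have "card T \<noteq> 1"
  proof
    assume "card T = 1"
    then obtain e where "T = {e}" by (auto simp: card_Suc_eq)
    with T_block admissible_B eq d M x show False
      using single_term_ne_carry[of d "B e" "e - m" M x] by (auto simp: less_diff_conv2)
  qed
  ultimately show ?thesis by linarith
qed

lemma carry_needs_three_terms:
  assumes M: "M \<ge> 1" and A: "admissible_coeff d A" and eq: "block_sum = A + 3 ^ (2 * d) * M"
  shows "3 \<le> card T"
proof -
  have "\<bar>A\<bar> \<le> int d" using A by (simp add: admissible_coeff_def)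
  hence "2 \<le> card T" using carry_needs_two_terms[OF M _ eq] by simp
  moreover have "card T \<noteq> 2"
  proof
    assume "card T = 2"
    then obtain e1 e2 where T: "T = {e1, e2}" "e1 \<noteq> e2" by (auto simp: card_2_iff)
    hence "e1 - m \<noteq> e2 - m" using T_block by auto
    with T T_block admissible_B eq d M A show False
      using two_terms_ne_carry[of d A "B e1" "B e2" "e1 - m" "e2 - m" M] by (auto simp: less_diff_conv2)
  qed
  ultimately show ?thesis by linarith
qed

lemma block_card_lower:
  assumes A: "A = 0 \<or> admissible_coeff d A" and c: "\<bar>c\<bar> \<le> int d" and M: "0 \<le> M"
    and eq: "block_sum = A + c + 3 ^ (2 * d) * M"
  shows "of_bool (A \<noteq> 0) + of_bool (M \<noteq> 0) \<le> card T + of_bool (c \<noteq> 0 \<and> A \<noteq> 0)"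
proof (cases "M = 0")
  case True
  hence "A \<noteq> 0 \<Longrightarrow> c = 0 \<Longrightarrow> T \<noteq> {}" using eq block_sum_eq_0_iff by auto
  thus ?thesis using True finite_T by (auto simp: card_gt_0_iff Suc_le_eq)
next
  case False
  hence M1: "M \<ge> 1" using M by simp
  consider "A = 0" | "A \<noteq> 0" "c = 0" | "A \<noteq> 0" "c \<noteq> 0" by blast
  thus ?thesis
  proof cases
    case 1
    thus ?thesis using carry_needs_two_terms[OF M1 c] eq \<open>M \<noteq> 0\<close> by simp
  next
    case 2
    hence "3 \<le> card T" using carry_needs_three_terms[OF M1, of A] A eq by simp
    thus ?thesis using 2 \<open>M \<noteq> 0\<close> by simp
  next
    case 3
    have "2 * int d < 3 ^ (2 * d)" using int_less_pow3[of "2 * d"] by simp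
    moreover have "(3::int) ^ (2 * d) \<le> 3 ^ (2 * d) * M" using M1 by simp
    moreover have "0 \<le> A" using A by (auto simp: admissible_coeff_def)
    ultimately have "block_sum \<noteq> 0" using eq abs_le_D2[OF c] by linarith
    hence "T \<noteq> {}" using block_sum_eq_0_iff by simp
    thus ?thesis using 3 False finite_T by (simp add: card_gt_0_iff Suc_le_eq)
  qed
qed

lemma block_card_eq:
  assumes A: "A = 0 \<or> admissible_coeff d A" and c: "\<bar>c\<bar> \<le> int d" and M: "0 \<le> M"
    and eq: "block_sum = A + c + 3 ^ (2 * d) * M"
    and no_excess: "c = 0 \<or> A = 0" and card_T: "card T \<le> of_bool (A \<noteq> 0) + of_bool (M \<noteq> 0)"
  shows "M = 0" "c = 0" "T = (if A = 0 then {} else {m})" "A \<noteq> 0 \<Longrightarrow> B m = A"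
proof -
  show M0: "M = 0"
  proof (rule ccontr)
    assume "M \<noteq> 0"
    hence M1: "M \<ge> 1" using M by simp
    show False
    proof (cases "A = 0")
      case True
      thus False using carry_needs_two_terms[OF M1 c] eq card_T \<open>M \<noteq> 0\<close> by simp
    next
      case False
      hence "3 \<le> card T" using carry_needs_three_terms[OF M1, of A] A eq no_excess by simp
      thus False using card_T False \<open>M \<noteq> 0\<close> by simp
    qed
  qed
  show c0: "c = 0"
  proof (rule ccontr)
    assume "c \<noteq> 0"
    hence "T = {}" using no_excess card_T M0 finite_T by simp
    thus False using eq M0 no_excess \<open>c \<noteq> 0\<close> by simp
  qed
  have sum_A: "block_sum = A" using eq M0 c0 by simp
  have "T = (if A = 0 then {} else {m}) \<and> (A \<noteq> 0 \<longrightarrow> B m = A)"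
  proof (cases "A = 0")
    case True
    thus ?thesis using sum_A block_sum_eq_0_iff by simp
  next
    case False
    hence "card T = 1" using sum_A block_sum_eq_0_iff card_T M0 finite_T by (simp add: le_Suc_eq)
    then obtain e where T: "T = {e}" by (auto simp: card_Suc_eq)
    hence B_e: "B e * 3 ^ (e - m) = A" using sum_A by simp
    have "e = m"
    proof (rule ccontr)
      assume "e \<noteq> m"
      hence "e - m > 0" using T T_block by auto
      then obtain k where "e - m = Suc k" using gr0_implies_Suc by blast
      hence "3 dvd A" using B_e by auto
      thus False using A False by (simp add: admissible_coeff_def)
    qed
    thus ?thesis using T B_e False by simp
  qed
  thus "T = (if A = 0 then {} else {m})" "A \<noteq> 0 \<Longrightarrow> B m = A" by simp_all
qed

end

lemma split_lowest_block:
  fixes A B :: "nat \<Rightarrow> int"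
  assumes d: "d \<ge> 1" and A: "\<forall>j. A j = 0 \<or> admissible_coeff d (A j)" and k: "k < N"
    and S: "finite S" "\<forall>e\<in>S. admissible_coeff d (B e) \<and> 2 * d * k \<le> e" and c: "\<bar>c\<bar> \<le> int d"
    and eq: "(\<Sum>j\<in>{k..<N}. A j * 3 ^ (2 * d * j)) + c * 3 ^ (2 * d * k) = (\<Sum>e\<in>S. B e * 3 ^ e)"
  obtains M where "0 \<le> M" "M \<le> int d"
    "(\<Sum>j\<in>{Suc k..<N}. A j * 3 ^ (2 * d * j)) + (- M) * 3 ^ (2 * d * Suc k)
       = (\<Sum>e\<in>{e\<in>S. 2 * d * Suc k \<le> e}. B e * 3 ^ e)"
    "(\<Sum>e\<in>{e\<in>S. e < 2 * d * Suc k}. B e * 3 ^ (e - 2 * d * k)) = A k + c + 3 ^ (2 * d) * M"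
proof -
  define P Q :: int where "P = 3 ^ (2 * d * k)" and "Q = 3 ^ (2 * d)"
  define T S' where "T = {e\<in>S. e < 2 * d * Suc k}" and "S' = {e\<in>S. 2 * d * Suc k \<le> e}"
  define H where "H = (\<Sum>j\<in>{Suc k..<N}. A j * 3 ^ (2 * d * j))"
  have PQ: "(3::int) ^ (2 * d * Suc k) = P * Q"
    by (simp add: P_def Q_def power_add[symmetric] algebra_simps)
  have low: "(\<Sum>e\<in>T. B e * 3 ^ e) = P * (\<Sum>e\<in>T. B e * 3 ^ (e - 2 * d * k))"
    unfolding sum_distrib_left
  proof (rule sum.cong)
    fix e assume "e \<in> T"
    hence "e = 2 * d * k + (e - 2 * d * k)" using S by (auto simp: T_def)
    thus "B e * 3 ^ e = P * (B e * 3 ^ (e - 2 * d * k))" unfolding P_def by (metis power_add mult.left_commute)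
  qed simp
  have "2 * d * Suc k \<le> 2 * d * j" if "Suc k \<le> j" for j
    using that by (rule mult_le_mono2)
  hence "P * Q dvd (\<Sum>e\<in>S'. B e * 3 ^ e) - H"
    unfolding H_def PQ[symmetric]
    by (intro dvd_diff dvd_sum dvd_mult le_imp_power_dvd) (auto simp: S'_def)
  then obtain C where C: "(\<Sum>e\<in>S'. B e * 3 ^ e) - H = P * Q * C" by (elim dvdE)
  have "S = T \<union> S'" "T \<inter> S' = {}" by (auto simp: T_def S'_def)
  hence "(\<Sum>e\<in>S. B e * 3 ^ e) = (\<Sum>e\<in>T. B e * 3 ^ e) + (\<Sum>e\<in>S'. B e * 3 ^ e)"
    using S(1) by (simp add: sum.union_disjoint)
  moreover have "(\<Sum>j\<in>{k..<N}. A j * 3 ^ (2 * d * j)) = A k * P + H"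
    using k by (simp add: sum.atLeast_Suc_lessThan H_def P_def)
  ultimately have "P * (\<Sum>e\<in>T. B e * 3 ^ (e - 2 * d * k)) = P * (A k + c + Q * (- C))"
    using eq low C unfolding P_def by (simp add: algebra_simps)
  hence block: "(\<Sum>e\<in>T. B e * 3 ^ (e - 2 * d * k)) = A k + c + Q * (- C)"
    by (simp add: P_def)
  have "T \<subseteq> {2 * d * k..<2 * d * k + 2 * d}" using S by (auto simp: T_def)
  moreover have "0 \<le> A k" "A k \<le> int d" using A[rule_format, of k] by (auto simp: admissible_coeff_def)
  ultimately have "0 \<le> - C" "- C \<le> int d"
    using carry_bounds[OF d _ _ _ _ _ _ block[unfolded Q_def]] S c by (auto simp: T_def)
  moreover have "H + C * 3 ^ (2 * d * Suc k) = (\<Sum>e\<in>S'. B e * 3 ^ e)"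
    using C PQ by (simp add: algebra_simps)
  ultimately show ?thesis using that[of "- C"] block by (simp add: H_def T_def S'_def Q_def)
qed

lemma card_split_at:
  fixes S :: "nat set"
  assumes "finite S"
  shows "card S = card {e\<in>S. e < t} + card {e\<in>S. t \<le> e}"
proof -
  have "S = {e\<in>S. e < t} \<union> {e\<in>S. t \<le> e}" by auto
  thus ?thesis using assms by (metis (no_types, lifting) card_Un_disjoint disjoint_iff
        finite_Un mem_Collect_eq not_le)
qed

lemma nonzero_atLeastLessThan_eq:
  "k < N \<Longrightarrow> {j\<in>{k..<N}. A j \<noteq> 0} = (if A k = 0 then {} else {k}) \<union> {j\<in>{Suc k..<N}. A j \<noteq> 0}"
  by (auto simp: Suc_le_eq le_less)

lemma card_nonzero_atLeastLessThan:
  "k < N \<Longrightarrow> card {j\<in>{k..<N}. A j \<noteq> 0} = of_bool (A k \<noteq> 0) + card {j\<in>{Suc k..<N}. A j \<noteq> 0}"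
  by (subst nonzero_atLeastLessThan_eq) auto

lemma digit_count_le:
  fixes A B :: "nat \<Rightarrow> int"
  assumes d: "d \<ge> 1" and A: "\<forall>j. A j = 0 \<or> admissible_coeff d (A j)" and "k \<le> N"
    and "finite S" "\<forall>e\<in>S. admissible_coeff d (B e) \<and> 2 * d * k \<le> e" "\<bar>c\<bar> \<le> int d"
    and "(\<Sum>j\<in>{k..<N}. A j * 3 ^ (2 * d * j)) + c * 3 ^ (2 * d * k) = (\<Sum>e\<in>S. B e * 3 ^ e)"
  shows "card {j\<in>{k..<N}. A j \<noteq> 0} \<le> card S + of_bool (c \<noteq> 0 \<and> A k \<noteq> 0)"
  using assms(3-)
proof (induction k arbitrary: S c rule: inc_induct)
  case (step k)
  obtain M where M: "0 \<le> M" "M \<le> int d"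
    and high: "(\<Sum>j\<in>{Suc k..<N}. A j * 3 ^ (2 * d * j)) + (- M) * 3 ^ (2 * d * Suc k)
       = (\<Sum>e\<in>{e\<in>S. 2 * d * Suc k \<le> e}. B e * 3 ^ e)"
    and block: "(\<Sum>e\<in>{e\<in>S. e < 2 * d * Suc k}. B e * 3 ^ (e - 2 * d * k)) = A k + c + 3 ^ (2 * d) * M"
    using split_lowest_block[OF d A step.hyps(2) step.prems] by blast
  have "card {j\<in>{Suc k..<N}. A j \<noteq> 0} \<le> card {e\<in>S. 2 * d * Suc k \<le> e} + of_bool (M \<noteq> 0)"
    using step.IH[OF _ _ _ high] step.prems M by (auto simp: of_bool_def split: if_splits)
  moreover have "of_bool (A k \<noteq> 0) + of_bool (M \<noteq> 0)
      \<le> card {e\<in>S. e < 2 * d * Suc k} + of_bool (c \<noteq> 0 \<and> A k \<noteq> 0)"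
    by (rule block_card_lower[OF d _ _ _ _ _ M(1) block]) (use A step.prems in auto)
  ultimately show ?case
    using card_split_at[OF step.prems(1), of "2 * d * Suc k"] card_nonzero_atLeastLessThan[OF step.hyps(2), of A]
    by linarith
qed simp

lemma digit_count_tight:
  fixes A B :: "nat \<Rightarrow> int"
  assumes d: "d \<ge> 1" and A: "\<forall>j. A j = 0 \<or> admissible_coeff d (A j)" and "k \<le> N"
    and "finite S" "\<forall>e\<in>S. admissible_coeff d (B e) \<and> 2 * d * k \<le> e" "\<bar>c\<bar> \<le> int d"
    and "(\<Sum>j\<in>{k..<N}. A j * 3 ^ (2 * d * j)) + c * 3 ^ (2 * d * k) = (\<Sum>e\<in>S. B e * 3 ^ e)"
    and "c = 0 \<or> A k = 0" and "card S = card {j\<in>{k..<N}. A j \<noteq> 0}"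
  shows "c = 0 \<and> S = (\<lambda>j. 2 * d * j) ` {j\<in>{k..<N}. A j \<noteq> 0}
    \<and> (\<forall>j\<in>{k..<N}. A j \<noteq> 0 \<longrightarrow> B (2 * d * j) = A j)"
  using assms(3-)
proof (induction k arbitrary: S c rule: inc_induct)
  case base
  thus ?case by simp
next
  case (step k)
  define T S' where "T = {e\<in>S. e < 2 * d * Suc k}" and "S' = {e\<in>S. 2 * d * Suc k \<le> e}"
  obtain M where M: "0 \<le> M" "M \<le> int d"
    and high: "(\<Sum>j\<in>{Suc k..<N}. A j * 3 ^ (2 * d * j)) + (- M) * 3 ^ (2 * d * Suc k)
       = (\<Sum>e\<in>S'. B e * 3 ^ e)"
    and block: "(\<Sum>e\<in>T. B e * 3 ^ (e - 2 * d * k)) = A k + c + 3 ^ (2 * d) * M"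
    using split_lowest_block[OF d A step.hyps(2) step.prems(1-4)] unfolding T_def S'_def by blast
  have S': "finite S'" "\<forall>e\<in>S'. admissible_coeff d (B e) \<and> 2 * d * Suc k \<le> e" "\<bar>- M\<bar> \<le> int d"
    using step.prems M by (auto simp: S'_def)
  have card_S: "card S = card T + card S'"
    unfolding T_def S'_def by (rule card_split_at[OF step.prems(1)])
  have card_supp: "card {j\<in>{k..<N}. A j \<noteq> 0} = of_bool (A k \<noteq> 0) + card {j\<in>{Suc k..<N}. A j \<noteq> 0}"
    by (rule card_nonzero_atLeastLessThan[OF step.hyps(2)])
  have "card {j\<in>{Suc k..<N}. A j \<noteq> 0} \<le> card S' + of_bool (M \<noteq> 0)"
    using digit_count_le[OF d A _ S' high] step.hyps(2) by (auto simp: of_bool_def split: if_splits)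
  hence "card T \<le> of_bool (A k \<noteq> 0) + of_bool (M \<noteq> 0)"
    using step.prems(6) card_S card_supp by linarith
  note block_eq = block_card_eq[OF d _ _ _ _ _ M(1) block step.prems(5) this]
  have T: "T = (if A k = 0 then {} else {2 * d * k})" "A k \<noteq> 0 \<Longrightarrow> B (2 * d * k) = A k"
    and M0: "M = 0" and c0: "c = 0"
    by (rule block_eq; use A step.prems in \<open>auto simp: T_def\<close>)+
  have "card S' = card {j\<in>{Suc k..<N}. A j \<noteq> 0}"
    using step.prems(6) card_S card_supp T(1) by (simp split: if_splits)
  hence IH: "S' = (\<lambda>j. 2 * d * j) ` {j\<in>{Suc k..<N}. A j \<noteq> 0}"
      "\<forall>j\<in>{Suc k..<N}. A j \<noteq> 0 \<longrightarrow> B (2 * d * j) = A j"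
    using step.IH[OF S' high] M0 by auto
  have "S = T \<union> S'" by (auto simp: T_def S'_def)
  also have "\<dots> = (\<lambda>j. 2 * d * j) ` {j\<in>{k..<N}. A j \<noteq> 0}"
    using T(1) IH(1) nonzero_atLeastLessThan_eq[OF step.hyps(2), of A] by auto
  finally show ?case using c0 T(2) IH(2) step.hyps(2) by (auto simp: Suc_le_eq le_less)
qed

lemma digit_expansion_unique:
  fixes A B :: "nat \<Rightarrow> int"
  assumes d: "d \<ge> 1" and A: "\<forall>j. A j = 0 \<or> admissible_coeff d (A j)" and A0: "A 0 = 0"
    and S: "finite S" "\<forall>e\<in>S. admissible_coeff d (B e)" and c: "\<bar>c\<bar> \<le> int d"
    and card: "card S \<le> card {j\<in>{..<N}. A j \<noteq> 0}"
    and eq: "(\<Sum>j<N. A j * 3 ^ (2 * d * j)) = (\<Sum>e\<in>S. B e * 3 ^ e) + c"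
  shows "c = 0" "S = (\<lambda>j. 2 * d * j) ` {j\<in>{..<N}. A j \<noteq> 0}"
    "\<And>j. j < N \<Longrightarrow> A j \<noteq> 0 \<Longrightarrow> B (2 * d * j) = A j"
proof -
  have S0: "finite S" "\<forall>e\<in>S. admissible_coeff d (B e) \<and> 2 * d * 0 \<le> e" "\<bar>- c\<bar> \<le> int d"
    using S c by auto
  have eq0: "(\<Sum>j\<in>{0..<N}. A j * 3 ^ (2 * d * j)) + (- c) * 3 ^ (2 * d * 0) = (\<Sum>e\<in>S. B e * 3 ^ e)"
    using eq by (simp add: atLeast0LessThan)
  have "card {j\<in>{..<N}. A j \<noteq> 0} \<le> card S"
    using digit_count_le[OF d A le0 S0 eq0] A0 by (simp add: atLeast0LessThan)
  hence "card S = card {j\<in>{0..<N}. A j \<noteq> 0}" using card by (simp add: atLeast0LessThan)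
  from digit_count_tight[OF d A le0 S0 eq0 _ this] A0
  show "c = 0" "S = (\<lambda>j. 2 * d * j) ` {j\<in>{..<N}. A j \<noteq> 0}"
    "\<And>j. j < N \<Longrightarrow> A j \<noteq> 0 \<Longrightarrow> B (2 * d * j) = A j"
    by (simp_all add: atLeast0LessThan)
qed

lemma decreasing_by_gap:
  fixes f :: "nat \<Rightarrow> nat"
  assumes step: "\<And>i. i \<in> {a..<b} \<Longrightarrow> f (Suc i) + m \<le> f i"
    and "a \<le> i" "i \<le> j" "j \<le> b"
  shows "f j + m * (j - i) \<le> f i"
  using assms(3-)
proof (induction j rule: dec_induct)
  case (step j)
  hence "f (Suc j) + m \<le> f j" using assms(2) by (intro assms(1)) auto
  thus ?case using step by (simp add: Suc_diff_le)
qed simp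

lemma inj_on_decreasing:
  fixes f :: "nat \<Rightarrow> nat"
  assumes "\<And>i. i \<in> {a..<b} \<Longrightarrow> f (Suc i) < f i"
  shows "inj_on f {a..b}"
proof (rule linorder_inj_onI')
  fix i j assume "i \<in> {a..b}" "j \<in> {a..b}" "i < j"
  moreover have "f (Suc i) + 1 \<le> f i" if "i \<in> {a..<b}" for i using assms[OF that] by simp
  ultimately have "f j + 1 * (j - i) \<le> f i" using decreasing_by_gap[of a b f 1 i j] by auto
  thus "f i \<noteq> f j" using \<open>i < j\<close> by simp
qed

lemma decreasing_onto_multiples:
  fixes n :: "nat \<Rightarrow> nat"
  assumes dec: "\<And>i. i \<in> {1..<r} \<Longrightarrow> n (Suc i) < n i"
    and onto: "n ` {1..r} = (\<lambda>j. m * j) ` {1..r}" and i: "i \<in> {1..r}"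
  shows "n i = m * (r + 1 - i)"
proof -
  have mult: "\<exists>q. n i = m * q \<and> 1 \<le> q \<and> q \<le> r" if "i \<in> {1..r}" for i
    using onto that by (metis (no_types, lifting) atLeastAtMost_iff image_iff)
  have gap: "n (Suc i) + m \<le> n i" if i: "i \<in> {1..<r}" for i
  proof -
    obtain p q where pq: "n (Suc i) = m * p" "n i = m * q"
      using mult[of i] mult[of "Suc i"] i by auto
    hence "Suc p \<le> q" using dec[OF i] by simp
    hence "m * Suc p \<le> m * q" by (rule mult_le_mono2)
    thus ?thesis using pq by simp
  qed
  obtain q1 where q1: "n 1 = m * q1" "q1 \<le> r" using mult[of 1] i by auto
  obtain qr where qr: "n r = m * qr" "1 \<le> qr" using mult[of r] i by auto
  have split: "m * (r + 1 - i) = m + m * (r - i)" "m * (r + 1 - i) + m * (i - 1) = m * r"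
  proof -
    have "r + 1 - i = 1 + (r - i)" "(r + 1 - i) + (i - 1) = r" using i by auto
    thus "m * (r + 1 - i) = m + m * (r - i)" "m * (r + 1 - i) + m * (i - 1) = m * r"
      by (metis add_mult_distrib2 mult_1_right)+
  qed
  have "n r + m * (r - i) \<le> n i" "n i + m * (i - 1) \<le> n 1"
    using decreasing_by_gap[of 1 r n m] gap i by auto
  moreover have "m \<le> n r" "n 1 \<le> m * r" using q1 qr by simp_all
  ultimately show ?thesis using split by linarith
qed

definition reversed_digits :: "nat \<Rightarrow> (nat \<Rightarrow> int) \<Rightarrow> nat \<Rightarrow> int" where
  "reversed_digits r a j = (if j \<in> {1..r} then a (r + 1 - j) else 0)"

lemma reversed_digits_0 [simp]: "reversed_digits r a 0 = 0"
  by (simp add: reversed_digits_def)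

lemma reversed_digits_rev: "i \<in> {1..r} \<Longrightarrow> reversed_digits r a (r + 1 - i) = a i"
  by (auto simp: reversed_digits_def)

lemma reversed_digits_admissible:
  assumes "\<And>i. i \<in> {1..r} \<Longrightarrow> admissible_coeff d (a i)"
  shows "reversed_digits r a j = 0 \<or> admissible_coeff d (reversed_digits r a j)"
proof -
  have "admissible_coeff d (a (r + 1 - j))" if "j \<in> {1..r}" for j by (rule assms) (use that in auto)
  thus ?thesis by (auto simp: reversed_digits_def)
qed

lemma nonzero_reversed_digits:
  assumes "\<And>i. i \<in> {1..r} \<Longrightarrow> admissible_coeff d (a i)"
  shows "{j\<in>{..<Suc r}. reversed_digits r a j \<noteq> 0} = {1..r}"
proof -
  have "a (r + 1 - j) \<noteq> 0" if "j \<in> {1..r}" for j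
  proof -
    have "admissible_coeff d (a (r + 1 - j))" by (rule assms) (use that in auto)
    thus ?thesis by (simp add: admissible_coeff_def)
  qed
  thus ?thesis by (auto simp: reversed_digits_def)
qed

lemma sum_reversed_digits:
  "(\<Sum>i=1..r. a i * 3 ^ (2 * (r + 1 - i) * d)) = (\<Sum>j<Suc r. reversed_digits r a j * 3 ^ (2 * d * j))"
proof -
  have "(\<Sum>i=1..r. a i * 3 ^ (2 * (r + 1 - i) * d)) = (\<Sum>j=1..r. reversed_digits r a j * 3 ^ (2 * d * j))"
    by (subst sum.atLeastAtMost_rev) (auto simp: reversed_digits_def mult.commute mult.left_commute
        intro!: sum.cong)
  also have "\<dots> = (\<Sum>j<Suc r. reversed_digits r a j * 3 ^ (2 * d * j))"
    by (rule sum.mono_neutral_left) (auto simp: reversed_digits_def)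
  finally show ?thesis .
qed

theorem lemma2p2:
  fixes d r s :: nat and c :: int and a b :: "nat \<Rightarrow> int" and n :: "nat \<Rightarrow> nat"
  assumes "d \<ge> 1" and "r \<ge> 1" and "s \<ge> 1" and "r \<ge> s"
    and "\<bar>c\<bar> \<le> int d"
    and "\<And>i. i \<in> {1..r} \<Longrightarrow> 1 \<le> a i \<and> a i \<le> int d \<and> \<not> 3 dvd a i"
    and "\<And>i. i \<in> {1..s} \<Longrightarrow> 1 \<le> b i \<and> b i \<le> int d \<and> \<not> 3 dvd b i"
    and "\<And>i. i \<in> {1..<s} \<Longrightarrow> n i > n (Suc i)"
    and "(\<Sum>i=1..r. a i * 3 ^ (2 * (r + 1 - i) * d)) = (\<Sum>i=1..s. b i * 3 ^ (n i)) + c"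
  shows "r = s \<and> c = 0 \<and> (\<forall>i\<in>{1..r}. a i = b i \<and> n i = 2 * d * (r + 1 - i))"
proof -
  have inj: "inj_on n {1..s}" using assms(8) by (rule inj_on_decreasing)
  define A B where "A = reversed_digits r a" and "B = b \<circ> inv_into {1..s} n"
  have B: "B (n i) = b i" if "i \<in> {1..s}" for i using inj that by (simp add: B_def)
  have adm_a: "admissible_coeff d (a i)" if "i \<in> {1..r}" for i
    using assms(6)[OF that] by (simp add: admissible_coeff_def)
  have supp: "{j\<in>{..<Suc r}. A j \<noteq> 0} = {1..r}" unfolding A_def using adm_a by (rule nonzero_reversed_digits)
  have "(\<Sum>e\<in>n ` {1..s}. B e * 3 ^ e) = (\<Sum>i=1..s. b i * 3 ^ (n i))"
    using inj by (simp add: sum.reindex B)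
  hence eq: "(\<Sum>j<Suc r. A j * 3 ^ (2 * d * j)) = (\<Sum>e\<in>n ` {1..s}. B e * 3 ^ e) + c"
    using assms(9) unfolding A_def sum_reversed_digits by simp
  have A: "\<forall>j. A j = 0 \<or> admissible_coeff d (A j)"
    unfolding A_def by (intro allI reversed_digits_admissible adm_a)
  have S: "\<forall>e\<in>n ` {1..s}. admissible_coeff d (B e)"
    using B assms(7) by (auto simp: admissible_coeff_def)
  have "card (n ` {1..s}) \<le> card {j\<in>{..<Suc r}. A j \<noteq> 0}"
    using assms(4) inj unfolding supp by (simp add: card_image)
  note digits = digit_expansion_unique[OF assms(1) A _ finite_imageI S assms(5) this eq,
      unfolded supp, OF reversed_digits_0[of r a, folded A_def]]
  have c: "c = 0" and img: "n ` {1..s} = (\<lambda>j. 2 * d * j) ` {1..r}" using digits by simp_all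
  have rs: "r = s" using img inj card_image[OF inj] assms(1) by (simp add: inj_on_def card_image)
  have n: "n i = 2 * d * (r + 1 - i)" if "i \<in> {1..r}" for i
    using decreasing_onto_multiples[OF _ img[unfolded rs[symmetric]] that] assms(8) rs by simp
  have "a i = b i" if i: "i \<in> {1..r}" for i
  proof -
    have "r + 1 - i \<in> {j\<in>{..<Suc r}. A j \<noteq> 0}" unfolding supp using i by auto
    hence "B (2 * d * (r + 1 - i)) = A (r + 1 - i)" using digits(3) by simp
    thus ?thesis using reversed_digits_rev[OF i, of a] B[of i] n[OF i] i rs by (simp add: A_def)
  qed
  with rs c n show ?thesis by blast
qed

end
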